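(* Let $(S,g)$ be a Damek--Ricci space and let $\xi$ be a (smooth) conformal vector field on $(S,g)$, i.e. $\mathcal{L}_\xi g = 2\rho g$ for some smooth function $\rho$ on $S$. Then the potential function $\rho$ vanishes identically; that is, $\xi$ is a Killing vector field.
   Context: A generalized Heisenberg algebra is a two-step nilpotent real Lie algebra $\mathfrak{n}=\mathfrak{v}\oplus\mathfrak{z}$ with an inner product $\langle\cdot,\cdot\rangle$, where $\mathfrak{z}$ is the center, $\mathfrak{v}$ is its orthogonal complement, $[\mathfrak{v},\mathfrak{v}]\subset\mathfrak{z}$, $[\mathfrak{v},\mathfrak{z}]=0$, and the maps $J_Z:\mathfrak{v}\to\mathfrak{v}$ ($Z\in\mathfrak{z}$) defined by $\langle J_ZV,W\rangle=\langle Z,[V,W]\rangle$ satisfy $J_Z^2=-\|Z\|^2\,\mathrm{Id}_{\mathfrak{v}}$ for all $Z\in\mathfrak{z}$. Given such $\mathfrak{n}$, let $\mathfrak{s}=\mathfrak{v}\oplus\mathfrak{z}\oplus\mathfrak{a}$ with $\mathfrak{a}=\mathbb{R}A$ and brackets extended by $[A,V]=\tfrac12 V$, $[A,Z]=Z$ for $V\in\mathfrak{v}$, $Z\in\mathfrak{z}$; equip $\mathfrak{s}$ with the inner product making $\mathfrak{v},\mathfrak{z},\mathfrak{a}$ mutually orthogonal, restricting to the given one on $\mathfrak{n}$, and with $\|A\|=1$. The Damek--Ricci space $S$ is the simply connected Lie group with Lie algebra $\mathfrak{s}$ endowed with the induced left-invariant Riemannian metric $g$. A smooth vector field $\xi$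 is conformal if $\mathcal{L}_\xi g=2\rho g$ for a smooth function $\rho$ (its potential function); it is Killing if $\rho\equiv0$. *)

theory Defs
  imports "HOL-Analysis.Analysis"
begin

text \<open>n = v (+) z, where v and z are finite-dimensional real inner product
spaces (types of class euclidean_space, hence of positive dimension) and the
Lie bracket on n is determined by a bilinear skew map br : v x v -> z
(brackets involving z vanish).  J_Z is defined by
<J_Z V, W> = <Z, [V,W]>, written out in an orthonormal basis of v.\<close>

definition heisJ :: "('v::euclidean_space \<Rightarrow> 'v \<Rightarrow> 'z::euclidean_space) \<Rightarrow> 'z \<Rightarrow> 'v \<Rightarrow> 'v" where
  "heisJ br Z V = (\<Sum>b\<in>Basis. (inner Z (br V b)) *\<^sub>R b)"

definition gen_heisenberg :: "('v::euclidean_space \<Rightarrow> 'v \<Rightarrow> 'z::euclidean_space) \<Rightarrow> bool" where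
  "gen_heisenberg br \<longleftrightarrow>
     bilinear br \<and> (\<forall>V W. br V W = - br W V) \<and>
     (\<forall>Z V. heisJ br Z (heisJ br Z V) = - ((norm Z)\<^sup>2) *\<^sub>R V)"

text \<open>S is realised as the manifold v x z x R, the point (V,Z,t) standing for
exp(V+Z) exp(tA).
Its Lie algebra is s = v (+) z (+) R A with [A,V] = V/2, [A,Z] = Z, and the
coordinate tangent space at the identity is identified with s.\<close>

definition dr_mult :: "('v::euclidean_space \<Rightarrow> 'v \<Rightarrow> 'z::euclidean_space)
     \<Rightarrow> 'v \<times> 'z \<times> real \<Rightarrow> 'v \<times> 'z \<times> real \<Rightarrow> 'v \<times> 'z \<times> real" where
  "dr_mult br p q = (case p of (V, Z, t) \<Rightarrow> case q of (V', Z', t') \<Rightarrow>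
      (V + exp (t/2) *\<^sub>R V', Z + exp t *\<^sub>R Z' + (exp (t/2) / 2) *\<^sub>R br V V', t + t'))"

definition dr_inv :: "'v::euclidean_space \<times> 'z::euclidean_space \<times> real \<Rightarrow> 'v \<times> 'z \<times> real" where
  "dr_inv p = (case p of (V, Z, t) \<Rightarrow> (- exp (-t/2) *\<^sub>R V, - exp (-t) *\<^sub>R Z, -t))"

definition s_inner :: "'v::euclidean_space \<times> 'z::euclidean_space \<times> real \<Rightarrow> 'v \<times> 'z \<times> real \<Rightarrow> real" where
  "s_inner u w = (case u of (a, b, s) \<Rightarrow> case w of (a', b', s') \<Rightarrow>
      inner a a' + inner b b' + s * s')"

definition dr_metric :: "('v::euclidean_space \<Rightarrow> 'v \<Rightarrow> 'z::euclidean_space)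
     \<Rightarrow> 'v \<times> 'z \<times> real \<Rightarrow> 'v \<times> 'z \<times> real \<Rightarrow> 'v \<times> 'z \<times> real \<Rightarrow> real" where
  "dr_metric br p u w =
     s_inner (frechet_derivative (dr_mult br (dr_inv p)) (at p) u)
             (frechet_derivative (dr_mult br (dr_inv p)) (at p) w)"

coinductive smooth_map :: "('a::euclidean_space \<Rightarrow> 'b::euclidean_space) \<Rightarrow> bool" where
  "(\<forall>x. f differentiable (at x)) \<Longrightarrow>
   (\<forall>d. smooth_map (\<lambda>x. frechet_derivative f (at x) d)) \<Longrightarrow> smooth_map f"

definition lie_deriv_metric ::
  "('a::euclidean_space \<Rightarrow> 'a \<Rightarrow> 'a \<Rightarrow> real) \<Rightarrow> ('a \<Rightarrow> 'a) \<Rightarrow> 'a \<Rightarrow> 'a \<Rightarrow> 'a \<Rightarrow> real" where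
  "lie_deriv_metric g \<xi> p u w =
     frechet_derivative (\<lambda>q. g q u w) (at p) (\<xi> p)
     + g p (frechet_derivative \<xi> (at p) u) w
     + g p u (frechet_derivative \<xi> (at p) w)"

end

theory Submission
  imports Defs
begin

text \<open>
In the left-invariant frame E_P (P in s) of S, let xi' be the left trivialization of xi and
f_P = <xi', P> its components. The conformal equation becomes
E_P f_Q + E_Q f_P + <[P, xi'], Q> + <P, [Q, xi']> = 2 rho <P, Q>, and [E_P, E_Q] = E_[P,Q]
by the symmetry of second derivatives. For unit vectors X in v, Z in z and Y = J_Z X, the
vectors A, X, Y, Z satisfy [A,X] = X/2, [A,Y] = Y/2, [A,Z] = Z, [X,Y] = Z, [X,Z] = [Y,Z] = 0.
With a, x, y, z the corresponding components and w = E_X y - E_Y x, the frame equations give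
E_Z a = - E_A w and E_Z w = rho, hence E_Z E_Z a = rho - E_A rho; but they also give
E_Z a = - E_A z - z, E_Z z = rho + a and E_A a = rho, hence E_Z E_Z a = - rho - E_A rho.
So rho = 0.
\<close>

section \<open>Smooth maps\<close>

lemma smooth_map_differentiable: "smooth_map f \<Longrightarrow> f differentiable (at x)"
  by (erule smooth_map.cases) auto

lemma smooth_map_frechet_derivative:
  "smooth_map f \<Longrightarrow> smooth_map (\<lambda>x. frechet_derivative f (at x) d)"
  by (erule smooth_map.cases) auto

lemma smooth_map_has_derivative:
  "smooth_map f \<Longrightarrow> (f has_derivative frechet_derivative f (at x)) (at x)"
  using smooth_map_differentiable frechet_derivative_works by blast

lemma linear_frechet_derivative_smooth: "smooth_map f \<Longrightarrow> linear (frechet_derivative f (at x))"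
  using smooth_map_has_derivative has_derivative_linear by blast

lemma smooth_mapI_derivative_closed:
  assumes "P f"
    and step: "\<And>g. P g \<Longrightarrow> \<exists>g'. (\<forall>x. (g has_derivative g' x) (at x)) \<and>
                  (\<forall>d. P (\<lambda>x. g' x d) \<or> smooth_map (\<lambda>x. g' x d))"
  shows "smooth_map f"
  using \<open>P f\<close>
proof (coinduction arbitrary: f rule: smooth_map.coinduct)
  case (smooth_map f)
  then obtain f' where f': "\<And>x. (f has_derivative f' x) (at x)"
    and P': "\<And>d. P (\<lambda>x. f' x d) \<or> smooth_map (\<lambda>x. f' x d)"
    using step by blast
  have "(\<lambda>x. frechet_derivative f (at x) d) = (\<lambda>x. f' x d)" for d
    using frechet_derivative_at[OF f'] by simp
  then show ?case
    using f' P' differentiableI by fastforce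
qed

lemma smooth_const: "smooth_map (\<lambda>x. c)"
  by (rule smooth_mapI_derivative_closed[where P = "\<lambda>g. \<exists>c. g = (\<lambda>x. c)"])
    (auto intro!: exI[of _ "\<lambda>x d. 0"])

lemma smooth_linear_comp:
  fixes f :: "'a::euclidean_space \<Rightarrow> 'b::euclidean_space"
  assumes f: "smooth_map f" and L: "linear L"
  shows "smooth_map (\<lambda>x. L (f x))"
proof (rule smooth_mapI_derivative_closed
    [where P = "\<lambda>g. \<exists>f::'a \<Rightarrow> 'b. g = (\<lambda>x. L (f x)) \<and> smooth_map f"])
  fix g assume "\<exists>f::'a \<Rightarrow> 'b. g = (\<lambda>x. L (f x)) \<and> smooth_map f"
  then obtain f where g: "g = (\<lambda>x. L (f x))" and f: "smooth_map f" by blast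
  have "(g has_derivative (\<lambda>d. L (frechet_derivative f (at x) d))) (at x)" for x
    unfolding g using smooth_map_has_derivative[OF f] linear_imp_has_derivative[OF L]
    by (rule has_derivative_compose)
  moreover have "\<exists>f'::'a \<Rightarrow> 'b. (\<lambda>x. L (frechet_derivative f (at x) d)) = (\<lambda>x. L (f' x))
      \<and> smooth_map f'" for d
    by (intro exI[of _ "\<lambda>x. frechet_derivative f (at x) d"] conjI refl
        smooth_map_frechet_derivative[OF f])
  ultimately show "\<exists>g'. (\<forall>x. (g has_derivative g' x) (at x)) \<and>
      (\<forall>d. (\<exists>f::'a \<Rightarrow> 'b. (\<lambda>x. g' x d) = (\<lambda>x. L (f x)) \<and> smooth_map f) \<or> smooth_map (\<lambda>x. g' x d))"
    by (intro exI[of _ "\<lambda>x d. L (frechet_derivative f (at x) d)"]) blast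
qed (use f in blast)

lemma smooth_linear: "linear L \<Longrightarrow> smooth_map L"
  by (rule smooth_mapI_derivative_closed[where P = "\<lambda>g. g = L"])
    (auto intro!: exI[of _ "\<lambda>x. L"] linear_imp_has_derivative smooth_const)

text \<open>Derivatives of sums, products and exponentials of functions in this class are again
  in it, which is what the coinduction for smooth_map needs.\<close>

inductive smooth_generated :: "('a::euclidean_space \<Rightarrow> real) \<Rightarrow> bool" where
  smooth: "smooth_map f \<Longrightarrow> smooth_generated f"
| add: "smooth_generated f \<Longrightarrow> smooth_generated g \<Longrightarrow> smooth_generated (\<lambda>x. f x + g x)"
| mult: "smooth_generated f \<Longrightarrow> smooth_generated g \<Longrightarrow> smooth_generated (\<lambda>x. f x * g x)"
| exp: "smooth_generated f \<Longrightarrow> smooth_generated (\<lambda>x. exp (f x))"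

lemma smooth_generated_has_derivative:
  "smooth_generated f \<Longrightarrow>
     \<exists>f'. (\<forall>x. (f has_derivative f' x) (at x)) \<and> (\<forall>d. smooth_generated (\<lambda>x. f' x d))"
proof (induction rule: smooth_generated.induct)
  case (smooth f)
  then show ?case
    by (intro exI[of _ "\<lambda>x. frechet_derivative f (at x)"] conjI allI smooth_map_has_derivative
        smooth_generated.smooth smooth_map_frechet_derivative)
next
  case (add f g)
  then obtain f' g' where "\<And>x. (f has_derivative f' x) (at x)" "\<And>d. smooth_generated (\<lambda>x. f' x d)"
    and "\<And>x. (g has_derivative g' x) (at x)" "\<And>d. smooth_generated (\<lambda>x. g' x d)"
    by blast
  then show ?case
    by (intro exI[of _ "\<lambda>x d. f' x d + g' x d"] conjI allI has_derivative_add smooth_generated.add)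
next
  case (mult f g)
  then obtain f' g' where "\<And>x. (f has_derivative f' x) (at x)" "\<And>d. smooth_generated (\<lambda>x. f' x d)"
    and "\<And>x. (g has_derivative g' x) (at x)" "\<And>d. smooth_generated (\<lambda>x. g' x d)"
    by blast
  with mult.hyps show ?case
    by (intro exI[of _ "\<lambda>x d. f x * g' x d + f' x d * g x"] conjI allI has_derivative_mult
        smooth_generated.add smooth_generated.mult)
next
  case (exp f)
  then obtain f' where "\<And>x. (f has_derivative f' x) (at x)" "\<And>d. smooth_generated (\<lambda>x. f' x d)"
    by blast
  with exp.hyps show ?case
    by (intro exI[of _ "\<lambda>x d. f' x d * exp (f x)"] conjI allI has_derivative_exp
        smooth_generated.mult smooth_generated.exp)
qed

lemma smooth_generated_smooth: "smooth_generated f \<Longrightarrow> smooth_map f"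
  by (erule smooth_mapI_derivative_closed) (use smooth_generated_has_derivative in blast)

lemma smooth_add: "smooth_map f \<Longrightarrow> smooth_map g \<Longrightarrow> smooth_map (\<lambda>x. f x + g x :: real)"
  by (rule smooth_generated_smooth) (intro smooth_generated.add smooth_generated.smooth)

lemma smooth_mult: "smooth_map f \<Longrightarrow> smooth_map g \<Longrightarrow> smooth_map (\<lambda>x. f x * g x :: real)"
  by (rule smooth_generated_smooth) (intro smooth_generated.mult smooth_generated.smooth)

lemma smooth_exp: "smooth_map f \<Longrightarrow> smooth_map (\<lambda>x. exp (f x :: real))"
  by (rule smooth_generated_smooth) (intro smooth_generated.exp smooth_generated.smooth)

lemma smooth_diff: "smooth_map f \<Longrightarrow> smooth_map g \<Longrightarrow> smooth_map (\<lambda>x. f x - g x :: real)"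
  using smooth_add[OF _ smooth_mult[OF smooth_const, of g "-1"]] by simp

lemma smooth_sum:
  "finite I \<Longrightarrow> (\<And>i. i \<in> I \<Longrightarrow> smooth_map (f i)) \<Longrightarrow> smooth_map (\<lambda>x. \<Sum>i\<in>I. f i x :: real)"
  by (induction I rule: finite_induct) (auto simp: smooth_const smooth_add)

lemma smooth_minus: "smooth_map f \<Longrightarrow> smooth_map (\<lambda>x. - f x :: real)"
  using smooth_mult[OF smooth_const, of f "-1"] by simp

lemma smooth_divide: "smooth_map f \<Longrightarrow> smooth_map (\<lambda>x. f x / c :: real)"
  using smooth_mult[OF _ smooth_const, of f "1 / c"] by simp

lemma smooth_inner_const: "smooth_map f \<Longrightarrow> smooth_map (\<lambda>x. f x \<bullet> c)"
  using smooth_linear_comp[of f "\<lambda>y. y \<bullet> c"] by (simp add: linear_iff inner_add_left)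

lemma smooth_bilinear_inner:
  fixes f :: "'a::euclidean_space \<Rightarrow> 'b::euclidean_space" and g :: "'a \<Rightarrow> 'c::euclidean_space"
    and b :: "'b \<Rightarrow> 'c \<Rightarrow> 'd::euclidean_space"
  assumes b: "bilinear b" and f: "smooth_map f" and g: "smooth_map g"
  shows "smooth_map (\<lambda>x. b (f x) (g x) \<bullet> c)"
proof -
  have expand: "(\<lambda>x. b (f x) (g x) \<bullet> c) = (\<lambda>x. \<Sum>i\<in>Basis. (f x \<bullet> i) * (b i (g x) \<bullet> c))"
    using b unfolding bilinear_def by (intro ext Linear_Algebra.linear_componentwise) simp
  have "linear (\<lambda>y. b i y \<bullet> c)" for i
    using b unfolding bilinear_def by (intro linear_compose[of "b i" "\<lambda>z. z \<bullet> c", unfolded o_def])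
      (simp_all add: linear_iff inner_add_left)
  then show ?thesis
    unfolding expand
    by (intro smooth_sum finite_Basis smooth_mult smooth_inner_const f smooth_linear_comp[OF g])
qed

section \<open>Symmetry of second derivatives and commutators of vector fields\<close>

lemma has_derivative_along_line:
  fixes h :: "'a::real_normed_vector \<Rightarrow> real"
  assumes "h differentiable (at (a + r *\<^sub>R u))"
  shows "((\<lambda>r. h (a + r *\<^sub>R u)) has_derivative
           (\<lambda>y. y * frechet_derivative h (at (a + r *\<^sub>R u)) u)) (at r)"
proof -
  have line: "((\<lambda>r. a + r *\<^sub>R u) has_derivative (\<lambda>y. y *\<^sub>R u)) (at r)"
    by (auto intro!: derivative_eq_intros)
  have hd: "(h has_derivative frechet_derivative h (at (a + r *\<^sub>R u))) (at (a + r *\<^sub>R u))"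
    using assms frechet_derivative_works by blast
  show ?thesis
    using has_derivative_compose[OF line hd] linear_scale[OF has_derivative_linear[OF hd]] by simp
qed

lemma second_difference_mean_value:
  fixes h :: "'a::real_normed_vector \<Rightarrow> real"
  assumes h: "\<And>x. h differentiable (at x)" and s: "0 < s"
  obtains \<theta> where "0 < \<theta>" "\<theta> < s"
    "h (p + s *\<^sub>R u + s *\<^sub>R v) - h (p + s *\<^sub>R u) - h (p + s *\<^sub>R v) + h p
       = s * (frechet_derivative h (at (p + (\<theta> *\<^sub>R u + s *\<^sub>R v))) u
              - frechet_derivative h (at (p + \<theta> *\<^sub>R u)) u)"
proof -
  define \<phi> where "\<phi> r = h (p + s *\<^sub>R v + r *\<^sub>R u) - h (p + r *\<^sub>R u)" for r
  have "(\<phi> has_derivative (\<lambda>y. y * (frechet_derivative h (at (p + s *\<^sub>R v + r *\<^sub>R u)) u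
                                    - frechet_derivative h (at (p + r *\<^sub>R u)) u)))
          (at r within {0..s})" for r
    unfolding \<phi>_def[abs_def]
    by (rule has_derivative_at_withinI, rule has_derivative_eq_rhs,
        rule has_derivative_diff[OF has_derivative_along_line[OF h]
          has_derivative_along_line[OF h]])
      (simp add: algebra_simps)
  from mvt_simple[OF s this] obtain \<theta> where \<theta>: "\<theta> \<in> {0<..<s}"
    and mv: "\<phi> s - \<phi> 0 = (s - 0) * (frechet_derivative h (at (p + s *\<^sub>R v + \<theta> *\<^sub>R u)) u
                                - frechet_derivative h (at (p + \<theta> *\<^sub>R u)) u)"
    by blast
  show ?thesis
    by (rule that[of \<theta>]) (use \<theta> mv in \<open>auto simp: \<phi>_def algebra_simps\<close>)
qed

lemma second_difference_estimate:
  fixes h :: "'a::real_normed_vector \<Rightarrow> real"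
  assumes h: "\<And>x. h differentiable (at x)"
    and k: "((\<lambda>q. frechet_derivative h (at q) u) has_derivative G) (at p)"
    and e: "e > 0"
  shows "\<exists>d>0. \<forall>s. 0 < s \<and> s < d \<longrightarrow>
     \<bar>h (p + s *\<^sub>R u + s *\<^sub>R v) - h (p + s *\<^sub>R u) - h (p + s *\<^sub>R v) + h p - s\<^sup>2 * G v\<bar> \<le> e * s\<^sup>2"
proof -
  define k where "k q = frechet_derivative h (at q) u" for q
  define C where "C = 2 * norm u + norm v + 1"
  have C: "C > 0" unfolding C_def by (simp add: add_nonneg_pos)
  obtain \<delta> where \<delta>: "\<delta> > 0"
    and k_approx: "\<And>y. norm (y - p) < \<delta> \<Longrightarrow> norm (k y - k p - G (y - p)) \<le> e / C * norm (y - p)"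
    using k e C unfolding has_derivative_at_alt k_def by (meson divide_pos_pos)
  have "\<bar>h (p + s *\<^sub>R u + s *\<^sub>R v) - h (p + s *\<^sub>R u) - h (p + s *\<^sub>R v) + h p - s\<^sup>2 * G v\<bar> \<le> e * s\<^sup>2"
    if s: "0 < s" "s < \<delta> / C" for s
  proof -
    obtain \<theta> where \<theta>: "0 < \<theta>" "\<theta> < s"
      and mv: "h (p + s *\<^sub>R u + s *\<^sub>R v) - h (p + s *\<^sub>R u) - h (p + s *\<^sub>R v) + h p
                 = s * (k (p + (\<theta> *\<^sub>R u + s *\<^sub>R v)) - k (p + \<theta> *\<^sub>R u))"
      using second_difference_mean_value[OF h s(1), of p u v] unfolding k_def by blast
    define w1 where "w1 = \<theta> *\<^sub>R u + s *\<^sub>R v"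
    define w2 where "w2 = \<theta> *\<^sub>R u"
    have "norm w1 \<le> norm (\<theta> *\<^sub>R u) + norm (s *\<^sub>R v)"
      unfolding w1_def by (rule norm_triangle_ineq)
    also have "\<dots> \<le> s * norm u + s * norm v"
      using \<theta> s by (simp add: mult_right_mono)
    finally have w1: "norm w1 \<le> s * (norm u + norm v)"
      by (simp add: distrib_left)
    have w2: "norm w2 \<le> s * norm u"
      unfolding w2_def using \<theta> by (simp add: mult_right_mono)
    have small: "s * C < \<delta>" using s C by (simp add: pos_less_divide_eq)
    have sum_w: "norm w1 + norm w2 \<le> s * C"
      using w1 w2 s unfolding C_def by (simp add: algebra_simps)
    have "G w1 - G w2 = s * G v"
      unfolding w1_def w2_def using has_derivative_linear[OF k]
      by (simp add: linear_add linear_scale)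
    then have "k (p + w1) - k (p + w2) - s * G v
        = (k (p + w1) - k p - G w1) - (k (p + w2) - k p - G w2)"
      by simp
    also have "\<bar>\<dots>\<bar> \<le> \<bar>k (p + w1) - k p - G w1\<bar> + \<bar>k (p + w2) - k p - G w2\<bar>"
      by (rule abs_triangle_ineq4)
    also have "\<dots> \<le> e / C * norm w1 + e / C * norm w2"
    proof -
      have "norm w1 < \<delta>" "norm w2 < \<delta>"
        using sum_w small norm_ge_zero[of w1] norm_ge_zero[of w2] by linarith+
      then show ?thesis
        using k_approx[of "p + w1"] k_approx[of "p + w2"] by (intro add_mono) simp_all
    qed
    also have "\<dots> = e / C * (norm w1 + norm w2)"
      by (simp add: distrib_left)
    also have "\<dots> \<le> e / C * (s * C)"
      using sum_w e C by (intro mult_left_mono) simp_all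
    also have "\<dots> = e * s"
      using C by simp
    finally have "\<bar>k (p + w1) - k (p + w2) - s * G v\<bar> \<le> e * s" .
    moreover have "h (p + s *\<^sub>R u + s *\<^sub>R v) - h (p + s *\<^sub>R u) - h (p + s *\<^sub>R v) + h p - s\<^sup>2 * G v
        = s * (k (p + w1) - k (p + w2) - s * G v)"
      unfolding mv w1_def w2_def by (simp add: power2_eq_square right_diff_distrib)
    ultimately show ?thesis
      using s by (simp add: abs_mult power2_eq_square mult_left_mono)
  qed
  then show ?thesis
    using \<delta> C by (intro exI[of _ "\<delta> / C"]) auto
qed

theorem frechet_derivative_second_symmetric:
  fixes h :: "'a::real_normed_vector \<Rightarrow> real"
  assumes h: "\<And>x. h differentiable (at x)"
    and u: "(\<lambda>q. frechet_derivative h (at q) u) differentiable (at p)"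
    and v: "(\<lambda>q. frechet_derivative h (at q) v) differentiable (at p)"
  shows "frechet_derivative (\<lambda>q. frechet_derivative h (at q) u) (at p) v
       = frechet_derivative (\<lambda>q. frechet_derivative h (at q) v) (at p) u"
    (is "?a = ?b")
proof (rule ccontr)
  assume "?a \<noteq> ?b"
  define e where "e = \<bar>?a - ?b\<bar> / 4"
  have e: "e > 0" using \<open>?a \<noteq> ?b\<close> unfolding e_def by simp
  obtain d1 where d1: "d1 > 0" and est1: "\<And>s. 0 < s \<Longrightarrow> s < d1 \<Longrightarrow>
     \<bar>h (p + s *\<^sub>R u + s *\<^sub>R v) - h (p + s *\<^sub>R u) - h (p + s *\<^sub>R v) + h p - s\<^sup>2 * ?a\<bar> \<le> e * s\<^sup>2"
    using second_difference_estimate[OF h u[unfolded frechet_derivative_works] e] by blast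
  obtain d2 where d2: "d2 > 0" and est2: "\<And>s. 0 < s \<Longrightarrow> s < d2 \<Longrightarrow>
     \<bar>h (p + s *\<^sub>R v + s *\<^sub>R u) - h (p + s *\<^sub>R v) - h (p + s *\<^sub>R u) + h p - s\<^sup>2 * ?b\<bar> \<le> e * s\<^sup>2"
    using second_difference_estimate[OF h v[unfolded frechet_derivative_works] e] by blast
  define s where "s = min d1 d2 / 2"
  have s: "0 < s" "s < d1" "s < d2" unfolding s_def using d1 d2 by auto
  have "s\<^sup>2 * \<bar>?a - ?b\<bar> = \<bar>s\<^sup>2 * ?a - s\<^sup>2 * ?b\<bar>"
    by (simp add: right_diff_distrib[symmetric] abs_mult)
  also have "\<dots> \<le> s\<^sup>2 * (2 * e)"
    using est1[OF s(1,2)] est2[OF s(1,3)] by (simp add: ac_simps)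
  finally have "\<bar>?a - ?b\<bar> \<le> 2 * e" using s by simp
  then show False using \<open>?a \<noteq> ?b\<close> unfolding e_def by simp
qed

lemma frechet_derivative_basis_expansion:
  fixes h :: "'a::euclidean_space \<Rightarrow> real"
  assumes "smooth_map h"
  shows "frechet_derivative h (at q) w = (\<Sum>b\<in>Basis. (w \<bullet> b) * frechet_derivative h (at q) b)"
  using Linear_Algebra.linear_componentwise[OF linear_frechet_derivative_smooth[OF assms],
      where x = w and j = 1]
  by simp

lemma has_derivative_frechet_derivative_along:
  fixes h :: "'a::euclidean_space \<Rightarrow> real"
  assumes h: "smooth_map h" and W: "(W has_derivative W') (at p)"
  shows "((\<lambda>q. frechet_derivative h (at q) (W q)) has_derivative
     (\<lambda>e. frechet_derivative h (at p) (W' e)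
        + frechet_derivative (\<lambda>q. frechet_derivative h (at q) (W p)) (at p) e)) (at p)"
proof -
  define H where "H b = frechet_derivative (\<lambda>q. frechet_derivative h (at q) b) (at p)" for b
  have H: "((\<lambda>q. frechet_derivative h (at q) b) has_derivative H b) (at p)" for b
    unfolding H_def using smooth_map_has_derivative[OF smooth_map_frechet_derivative[OF h]] .
  note expand = frechet_derivative_basis_expansion[OF h]
  have expand_W: "(\<lambda>q. frechet_derivative h (at q) (W q))
      = (\<lambda>q. \<Sum>b\<in>Basis. (W q \<bullet> b) * frechet_derivative h (at q) b)"
    by (rule ext) (rule expand)
  have expand_Wp: "(\<lambda>q. frechet_derivative h (at q) (W p))
      = (\<lambda>q. \<Sum>b\<in>Basis. (W p \<bullet> b) * frechet_derivative h (at q) b)"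
    by (rule ext) (rule expand)
  have "((\<lambda>q. \<Sum>b\<in>Basis. (W p \<bullet> b) * frechet_derivative h (at q) b) has_derivative
      (\<lambda>e. \<Sum>b\<in>Basis. (W p \<bullet> b) * H b e)) (at p)"
    by (intro has_derivative_sum has_derivative_eq_rhs[OF has_derivative_mult[OF has_derivative_const H]])
      simp
  then have H_W: "frechet_derivative (\<lambda>q. frechet_derivative h (at q) (W p)) (at p)
      = (\<lambda>e. \<Sum>b\<in>Basis. (W p \<bullet> b) * H b e)"
    unfolding expand_Wp by (rule frechet_derivative_at[symmetric])
  have "((\<lambda>q. \<Sum>b\<in>Basis. (W q \<bullet> b) * frechet_derivative h (at q) b) has_derivative
      (\<lambda>e. \<Sum>b\<in>Basis. (W p \<bullet> b) * H b e + (W' e \<bullet> b) * frechet_derivative h (at p) b)) (at p)"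
    by (intro has_derivative_sum has_derivative_mult[OF has_derivative_inner_left[OF W] H])
  then show ?thesis
    unfolding H_W expand_W
    by (rule has_derivative_eq_rhs) (simp add: fun_eq_iff sum.distrib expand[symmetric])
qed

theorem frechet_derivative_commutator:
  fixes h :: "'a::euclidean_space \<Rightarrow> real"
  assumes h: "smooth_map h"
    and W1: "(W1 has_derivative W1') (at p)" and W2: "(W2 has_derivative W2') (at p)"
  shows "frechet_derivative (\<lambda>q. frechet_derivative h (at q) (W2 q)) (at p) (W1 p)
       - frechet_derivative (\<lambda>q. frechet_derivative h (at q) (W1 q)) (at p) (W2 p)
       = frechet_derivative h (at p) (W2' (W1 p) - W1' (W2 p))"
proof -
  have "frechet_derivative (\<lambda>q. frechet_derivative h (at q) (W1 p)) (at p) (W2 p)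
      = frechet_derivative (\<lambda>q. frechet_derivative h (at q) (W2 p)) (at p) (W1 p)"
    using h by (intro frechet_derivative_second_symmetric)
      (auto intro: smooth_map_differentiable smooth_map_frechet_derivative)
  then show ?thesis
    unfolding frechet_derivative_at[OF has_derivative_frechet_derivative_along[OF h W1], symmetric]
      frechet_derivative_at[OF has_derivative_frechet_derivative_along[OF h W2], symmetric]
    by (simp add: linear_diff[OF linear_frechet_derivative_smooth[OF h]])
qed

section \<open>The left-invariant frame of a Damek--Ricci space\<close>

type_synonym ('v, 'z) dr_point = "'v \<times> 'z \<times> real"

text \<open>Tangent vectors at a point are identified with elements of s = v + z + RA, as in dr_metric.
  dr_left_field br P q = dL_q P is the left-invariant vector field generated by P in s, and
  dr_trivialize br q = dL_{q^-1} is the left trivialization, its inverse (lemma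
  dr_trivialize_left_field); the two _deriv functions are their derivatives in q.
  s_bracket is the Lie bracket of s.\<close>

definition dr_left_field :: "('v::euclidean_space \<Rightarrow> 'v \<Rightarrow> 'z::euclidean_space)
    \<Rightarrow> ('v, 'z) dr_point \<Rightarrow> ('v, 'z) dr_point \<Rightarrow> ('v, 'z) dr_point" where
  "dr_left_field br P q =
     (exp (snd (snd q) / 2) *\<^sub>R fst P,
      exp (snd (snd q)) *\<^sub>R fst (snd P) + (exp (snd (snd q) / 2) / 2) *\<^sub>R br (fst q) (fst P),
      snd (snd P))"

definition dr_left_field_deriv :: "('v::euclidean_space \<Rightarrow> 'v \<Rightarrow> 'z::euclidean_space)
    \<Rightarrow> ('v, 'z) dr_point \<Rightarrow> ('v, 'z) dr_point \<Rightarrow> ('v, 'z) dr_point \<Rightarrow> ('v, 'z) dr_point" where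
  "dr_left_field_deriv br P q d =
     ((snd (snd d) / 2 * exp (snd (snd q) / 2)) *\<^sub>R fst P,
      (snd (snd d) * exp (snd (snd q))) *\<^sub>R fst (snd P)
        + (snd (snd d) / 2 * exp (snd (snd q) / 2) / 2) *\<^sub>R br (fst q) (fst P)
        + (exp (snd (snd q) / 2) / 2) *\<^sub>R br (fst d) (fst P),
      0)"

definition dr_trivialize :: "('v::euclidean_space \<Rightarrow> 'v \<Rightarrow> 'z::euclidean_space)
    \<Rightarrow> ('v, 'z) dr_point \<Rightarrow> ('v, 'z) dr_point \<Rightarrow> ('v, 'z) dr_point" where
  "dr_trivialize br q u =
     (exp (- snd (snd q) / 2) *\<^sub>R fst u,
      exp (- snd (snd q)) *\<^sub>R (fst (snd u) - (1/2) *\<^sub>R br (fst q) (fst u)),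
      snd (snd u))"

definition dr_trivialize_deriv :: "('v::euclidean_space \<Rightarrow> 'v \<Rightarrow> 'z::euclidean_space)
    \<Rightarrow> ('v, 'z) dr_point \<Rightarrow> ('v, 'z) dr_point \<Rightarrow> ('v, 'z) dr_point \<Rightarrow> ('v, 'z) dr_point" where
  "dr_trivialize_deriv br q d u =
     ((- snd (snd d) / 2 * exp (- snd (snd q) / 2)) *\<^sub>R fst u,
      (- snd (snd d) * exp (- snd (snd q))) *\<^sub>R (fst (snd u) - (1/2) *\<^sub>R br (fst q) (fst u))
        - (exp (- snd (snd q)) / 2) *\<^sub>R br (fst d) (fst u),
      0)"

definition s_bracket :: "('v::euclidean_space \<Rightarrow> 'v \<Rightarrow> 'z::euclidean_space)
    \<Rightarrow> ('v, 'z) dr_point \<Rightarrow> ('v, 'z) dr_point \<Rightarrow> ('v, 'z) dr_point" where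
  "s_bracket br P Q =
     ((snd (snd P) / 2) *\<^sub>R fst Q - (snd (snd Q) / 2) *\<^sub>R fst P,
      snd (snd P) *\<^sub>R fst (snd Q) - snd (snd Q) *\<^sub>R fst (snd P) + br (fst P) (fst Q),
      0)"

text \<open>Naming exp (t/2) turns identities between exponentials into rational identities.\<close>

lemma exp_half_representation:
  fixes t :: real
  obtains E where "E > 0" "exp (t / 2) = E" "exp t = E * E" "exp (- (t / 2)) = 1 / E"
    "exp (- t) = 1 / (E * E)" "exp (- t / 2) = 1 / E"
proof
  show "exp t = exp (t / 2) * exp (t / 2)" by (simp add: exp_add[symmetric])
  then show "exp (- t) = 1 / (exp (t / 2) * exp (t / 2))" by (simp add: exp_minus field_simps)
  show "exp (- (t / 2)) = 1 / exp (t / 2)" by (simp add: exp_minus field_simps)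
  then show "exp (- t / 2) = 1 / exp (t / 2)" by simp
qed simp_all

lemma linear_bilinear_fst:
  fixes br :: "'v::euclidean_space \<Rightarrow> 'v \<Rightarrow> 'z::euclidean_space"
  assumes "bilinear br"
  shows "linear (\<lambda>q::('v, 'z) dr_point. br (fst q) c)" "linear (\<lambda>q::('v, 'z) dr_point. br c (fst q))"
  using assms unfolding bilinear_def
  by (auto intro: linear_compose[of fst, unfolded o_def] linear_fst)

lemma has_derivative_dr_mult:
  fixes br :: "'v::euclidean_space \<Rightarrow> 'v \<Rightarrow> 'z::euclidean_space"
  assumes bl: "bilinear br"
  shows "(dr_mult br q has_derivative (\<lambda>u. dr_left_field br u q)) (at x)"
proof -
  have "dr_mult br q = (\<lambda>x. (fst q + exp (snd (snd q) / 2) *\<^sub>R fst x,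
      fst (snd q) + exp (snd (snd q)) *\<^sub>R fst (snd x) + (exp (snd (snd q) / 2) / 2) *\<^sub>R br (fst q) (fst x),
      snd (snd q) + snd (snd x)))"
    by (auto simp: dr_mult_def fun_eq_iff split: prod.splits)
  moreover note linear_imp_has_derivative[OF linear_bilinear_fst(2)[OF bl]]
  ultimately show ?thesis
    unfolding dr_left_field_def by (auto intro!: derivative_eq_intros)
qed

lemma frechet_derivative_dr_mult_inv:
  fixes br :: "'v::euclidean_space \<Rightarrow> 'v \<Rightarrow> 'z::euclidean_space"
  assumes bl: "bilinear br"
  shows "frechet_derivative (dr_mult br (dr_inv q)) (at q) = dr_trivialize br q"
proof -
  obtain V Z t where q: "q = (V, Z, t)" by (cases q) auto
  obtain E where E: "E > 0" "exp (t / 2) = E" "exp t = E * E" "exp (- (t / 2)) = 1 / E"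
    "exp (- t) = 1 / (E * E)" "exp (- t / 2) = 1 / E"
    by (rule exp_half_representation)
  show ?thesis
    unfolding frechet_derivative_at[OF has_derivative_dr_mult[OF bl], symmetric] q
    using E(1) by (simp add: dr_inv_def dr_left_field_def dr_trivialize_def fun_eq_iff E(2-6)
        bilinear_lmul[OF bl] bilinear_lneg[OF bl] algebra_simps)
qed

lemma dr_metric_eq_inner:
  fixes br :: "'v::euclidean_space \<Rightarrow> 'v \<Rightarrow> 'z::euclidean_space"
  assumes "bilinear br"
  shows "dr_metric br q u w = inner (dr_trivialize br q u) (dr_trivialize br q w)"
proof -
  have "s_inner a b = inner a b" for a b :: "('v, 'z) dr_point"
    by (cases a; cases b) (simp add: s_inner_def inner_prod_def)
  then show ?thesis
    unfolding dr_metric_def frechet_derivative_dr_mult_inv[OF assms] by simp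
qed

lemma has_derivative_dr_trivialize_field:
  fixes br :: "'v::euclidean_space \<Rightarrow> 'v \<Rightarrow> 'z::euclidean_space"
    and W :: "('v, 'z) dr_point \<Rightarrow> ('v, 'z) dr_point"
  assumes bl: "bilinear br" and W: "(W has_derivative W') (at p)"
  shows "((\<lambda>q. dr_trivialize br q (W q)) has_derivative
           (\<lambda>d. dr_trivialize_deriv br p d (W p) + dr_trivialize br p (W' d))) (at p)"
proof -
  have br: "((\<lambda>q. br (fst q) (fst (W q))) has_derivative
              (\<lambda>d. br (fst p) (fst (W' d)) + br (fst d) (fst (W p)))) (at p)"
    using bounded_bilinear.FDERIV[OF bilinear_conv_bounded_bilinear[THEN iffD1, OF bl]
        has_derivative_fst[OF has_derivative_ident] has_derivative_fst[OF W]] .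
  show ?thesis
    unfolding dr_trivialize_def dr_trivialize_deriv_def
    by (rule derivative_eq_intros br W refl | simp add: fun_eq_iff algebra_simps)+
qed

lemma has_derivative_dr_trivialize:
  fixes br :: "'v::euclidean_space \<Rightarrow> 'v \<Rightarrow> 'z::euclidean_space"
  assumes bl: "bilinear br"
  shows "((\<lambda>q. dr_trivialize br q u) has_derivative (\<lambda>d. dr_trivialize_deriv br p d u)) (at p)"
proof -
  have "dr_trivialize br p 0 = 0"
    by (simp add: dr_trivialize_def bilinear_rzero[OF bl] zero_prod_def)
  then show ?thesis
    using has_derivative_dr_trivialize_field[OF bl has_derivative_const[of u "at p"]] by simp
qed

lemma has_derivative_dr_left_field:
  fixes br :: "'v::euclidean_space \<Rightarrow> 'v \<Rightarrow> 'z::euclidean_space"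
  assumes bl: "bilinear br"
  shows "(dr_left_field br P has_derivative dr_left_field_deriv br P q) (at q)"
proof -
  note br = linear_imp_has_derivative[OF linear_bilinear_fst(1)[OF bl], of "fst P" "at q"]
  have V: "((\<lambda>q::('v, 'z) dr_point. exp (snd (snd q) / 2) *\<^sub>R fst P) has_derivative
      (\<lambda>d. (snd (snd d) / 2 * exp (snd (snd q) / 2)) *\<^sub>R fst P)) (at q)"
    by (auto intro!: derivative_eq_intros)
  have Z: "((\<lambda>q::('v, 'z) dr_point. exp (snd (snd q)) *\<^sub>R fst (snd P)
        + (exp (snd (snd q) / 2) / 2) *\<^sub>R br (fst q) (fst P)) has_derivative
      (\<lambda>d. (snd (snd d) * exp (snd (snd q))) *\<^sub>R fst (snd P)
        + (snd (snd d) / 2 * exp (snd (snd q) / 2) / 2) *\<^sub>R br (fst q) (fst P)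
        + (exp (snd (snd q) / 2) / 2) *\<^sub>R br (fst d) (fst P))) (at q)"
    by (rule derivative_eq_intros br refl | simp add: fun_eq_iff algebra_simps)+
  show ?thesis
    unfolding dr_left_field_def[abs_def] dr_left_field_deriv_def
    by (rule has_derivative_Pair[OF V has_derivative_Pair[OF Z has_derivative_const]])
qed

lemma dr_trivialize_left_field:
  fixes br :: "'v::euclidean_space \<Rightarrow> 'v \<Rightarrow> 'z::euclidean_space"
  assumes bl: "bilinear br"
  shows "dr_trivialize br q (dr_left_field br P q) = P"
proof -
  obtain V Z t where q: "q = (V, Z, t)" by (cases q) auto
  obtain E where E: "E > 0" "exp (t / 2) = E" "exp t = E * E" "exp (- (t / 2)) = 1 / E"
    "exp (- t) = 1 / (E * E)" "exp (- t / 2) = 1 / E"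
    by (rule exp_half_representation)
  show ?thesis
    unfolding q dr_trivialize_def dr_left_field_def
    using E(1) by (simp add: E(2-6) bilinear_rmul[OF bl] algebra_simps)
qed

lemma dr_left_field_bracket:
  fixes br :: "'v::euclidean_space \<Rightarrow> 'v \<Rightarrow> 'z::euclidean_space"
  assumes bl: "bilinear br" and skew: "\<And>a b. br a b = - br b a"
  shows "dr_left_field_deriv br Q p (dr_left_field br P p)
         - dr_left_field_deriv br P p (dr_left_field br Q p)
       = dr_left_field br (s_bracket br P Q) p"
proof -
  obtain V Z t where p: "p = (V, Z, t)" by (cases p) auto
  obtain P1 P2 P3 where P: "P = (P1, P2, P3)" by (cases P) auto
  obtain Q1 Q2 Q3 where Q: "Q = (Q1, Q2, Q3)" by (cases Q) auto
  have exp_t: "exp (t / 2) * exp (t / 2) = exp t"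
    by (simp add: exp_add[symmetric])
  have V_part: "(P3 / 2 * exp (t / 2)) *\<^sub>R Q1 - (Q3 / 2 * exp (t / 2)) *\<^sub>R P1
      = exp (t / 2) *\<^sub>R ((P3 / 2) *\<^sub>R Q1 - (Q3 / 2) *\<^sub>R P1)"
    by (simp add: algebra_simps)
  have bilinear_parts:
    "(exp (t / 2) / 2) *\<^sub>R br (exp (t / 2) *\<^sub>R P1) Q1 = (exp t / 2) *\<^sub>R br P1 Q1"
    "(exp (t / 2) / 2) *\<^sub>R br (exp (t / 2) *\<^sub>R Q1) P1 = - (exp t / 2) *\<^sub>R br P1 Q1"
    "br V ((P3 / 2) *\<^sub>R Q1 - (Q3 / 2) *\<^sub>R P1)
       = (P3 / 2) *\<^sub>R br V Q1 - (Q3 / 2) *\<^sub>R br V P1"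
    using skew[of Q1 P1]
    by (simp_all add: bilinear_lmul[OF bl] bilinear_rsub[OF bl] bilinear_rmul[OF bl] exp_t[symmetric])
  have Z_part:
    "((P3 * exp t) *\<^sub>R Q2 + (P3 / 2 * exp (t / 2) / 2) *\<^sub>R br V Q1
        + (exp (t / 2) / 2) *\<^sub>R br (exp (t / 2) *\<^sub>R P1) Q1)
     - ((Q3 * exp t) *\<^sub>R P2 + (Q3 / 2 * exp (t / 2) / 2) *\<^sub>R br V P1
        + (exp (t / 2) / 2) *\<^sub>R br (exp (t / 2) *\<^sub>R Q1) P1)
      = exp t *\<^sub>R (P3 *\<^sub>R Q2 - Q3 *\<^sub>R P2 + br P1 Q1)
        + (exp (t / 2) / 2) *\<^sub>R br V ((P3 / 2) *\<^sub>R Q1 - (Q3 / 2) *\<^sub>R P1)"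
    unfolding bilinear_parts by (simp add: algebra_simps; simp add: scaleR_add_left[symmetric])
  show ?thesis
    unfolding p P Q dr_left_field_def dr_left_field_deriv_def s_bracket_def
    using V_part Z_part by (simp add: algebra_simps)
qed

lemma dr_trivialize_deriv_maurer_cartan:
  fixes br :: "'v::euclidean_space \<Rightarrow> 'v \<Rightarrow> 'z::euclidean_space"
  assumes bl: "bilinear br" and skew: "\<And>a b. br a b = - br b a"
  shows "dr_trivialize_deriv br p u (dr_left_field br P p)
         - dr_trivialize_deriv br p (dr_left_field br P p) u
       = s_bracket br P (dr_trivialize br p u)"
proof -
  obtain V Z t where p: "p = (V, Z, t)" by (cases p) auto
  obtain P1 P2 P3 where P: "P = (P1, P2, P3)" by (cases P) auto
  obtain u1 u2 u3 where u: "u = (u1, u2, u3)" by (cases u) auto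
  obtain E where E: "E > 0" "exp (t / 2) = E" "exp t = E * E" "exp (- (t / 2)) = 1 / E"
    "exp (- t) = 1 / (E * E)" "exp (- t / 2) = 1 / E"
    by (rule exp_half_representation)
  have "br u1 P1 = - br P1 u1" by (rule skew)
  then show ?thesis
    unfolding p P u dr_trivialize_def dr_left_field_def dr_trivialize_deriv_def s_bracket_def
    using E(1)
    by (simp add: E(2-6) bilinear_rmul[OF bl] bilinear_lmul[OF bl] bilinear_rsub[OF bl] algebra_simps;
        simp only: scaleR_add_left[symmetric]; simp)
qed

definition left_deriv :: "('v::euclidean_space \<Rightarrow> 'v \<Rightarrow> 'z::euclidean_space)
    \<Rightarrow> ('v, 'z) dr_point \<Rightarrow> (('v, 'z) dr_point \<Rightarrow> real) \<Rightarrow> ('v, 'z) dr_point \<Rightarrow> real" where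
  "left_deriv br P h q = frechet_derivative h (at q) (dr_left_field br P q)"

lemma smooth_dr_left_field_inner:
  fixes br :: "'v::euclidean_space \<Rightarrow> 'v \<Rightarrow> 'z::euclidean_space"
  assumes bl: "bilinear br"
  shows "smooth_map (\<lambda>q. dr_left_field br P q \<bullet> c)"
proof -
  have "(\<lambda>q. dr_left_field br P q \<bullet> c) = (\<lambda>q. exp (snd (snd q) / 2) * (fst P \<bullet> fst c)
      + exp (snd (snd q)) * (fst (snd P) \<bullet> fst (snd c))
      + exp (snd (snd q) / 2) / 2 * (br (fst q) (fst P) \<bullet> fst (snd c)) + snd (snd P) * snd (snd c))"
    by (simp add: dr_left_field_def fun_eq_iff inner_prod_def algebra_simps)
  moreover have "smooth_map (\<lambda>q::('v, 'z) dr_point. snd (snd q))"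
    by (intro smooth_linear) (simp add: linear_iff)
  moreover have "smooth_map (\<lambda>q::('v, 'z) dr_point. fst q)"
    by (intro smooth_linear linear_fst)
  ultimately show ?thesis
    by (simp add: smooth_add smooth_mult smooth_exp smooth_divide smooth_const
        smooth_bilinear_inner[OF bl])
qed

lemma smooth_left_deriv:
  fixes br :: "'v::euclidean_space \<Rightarrow> 'v \<Rightarrow> 'z::euclidean_space"
  assumes bl: "bilinear br" and h: "smooth_map h"
  shows "smooth_map (left_deriv br P h)"
proof -
  have "left_deriv br P h = (\<lambda>q. \<Sum>b\<in>Basis. (dr_left_field br P q \<bullet> b) * frechet_derivative h (at q) b)"
    unfolding left_deriv_def using frechet_derivative_basis_expansion[OF h] by blast
  then show ?thesis
    by (simp add: smooth_sum smooth_mult smooth_dr_left_field_inner[OF bl]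
        smooth_map_frechet_derivative[OF h])
qed

lemma left_deriv_add:
  "smooth_map f \<Longrightarrow> smooth_map g \<Longrightarrow>
     left_deriv br P (\<lambda>q. f q + g q) q = left_deriv br P f q + left_deriv br P g q"
  unfolding left_deriv_def
  using frechet_derivative_at[OF has_derivative_add[OF smooth_map_has_derivative
        smooth_map_has_derivative]]
  by (metis (no_types))

lemma left_deriv_diff:
  "smooth_map f \<Longrightarrow> smooth_map g \<Longrightarrow>
     left_deriv br P (\<lambda>q. f q - g q) q = left_deriv br P f q - left_deriv br P g q"
  unfolding left_deriv_def
  using frechet_derivative_at[OF has_derivative_diff[OF smooth_map_has_derivative
        smooth_map_has_derivative]]
  by (metis (no_types))

lemma left_deriv_bounded_linear:
  "bounded_linear L \<Longrightarrow> smooth_map f \<Longrightarrow> left_deriv br P (\<lambda>q. L (f q)) q = L (left_deriv br P f q)"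
  unfolding left_deriv_def
  using frechet_derivative_at[OF bounded_linear.has_derivative[OF _ smooth_map_has_derivative]]
  by (metis (no_types))

lemma left_deriv_minus: "smooth_map f \<Longrightarrow> left_deriv br P (\<lambda>q. - f q) q = - left_deriv br P f q"
  by (rule left_deriv_bounded_linear[OF bounded_linear_minus[OF bounded_linear_ident]])

lemma left_deriv_divide: "smooth_map f \<Longrightarrow> left_deriv br P (\<lambda>q. f q / c) q = left_deriv br P f q / c"
  by (rule left_deriv_bounded_linear[OF bounded_linear_divide])

lemma left_deriv_scaleR_field:
  fixes br :: "'v::euclidean_space \<Rightarrow> 'v \<Rightarrow> 'z::euclidean_space"
  assumes bl: "bilinear br" and h: "smooth_map h"
  shows "left_deriv br (c *\<^sub>R P) h q = c * left_deriv br P h q"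
proof -
  have "dr_left_field br (c *\<^sub>R P) q = c *\<^sub>R dr_left_field br P q"
    by (simp add: dr_left_field_def bilinear_rmul[OF bl] algebra_simps)
  then show ?thesis
    unfolding left_deriv_def by (simp add: linear_scale[OF linear_frechet_derivative_smooth[OF h]])
qed

lemma left_deriv_zero_field:
  fixes br :: "'v::euclidean_space \<Rightarrow> 'v \<Rightarrow> 'z::euclidean_space"
  assumes bl: "bilinear br" and h: "smooth_map h"
  shows "left_deriv br 0 h q = 0"
  using left_deriv_scaleR_field[OF bl h, of 0 0] by simp

theorem left_deriv_commutator:
  fixes br :: "'v::euclidean_space \<Rightarrow> 'v \<Rightarrow> 'z::euclidean_space"
  assumes bl: "bilinear br" and skew: "\<And>a b. br a b = - br b a" and h: "smooth_map h"
  shows "left_deriv br P (left_deriv br Q h) p - left_deriv br Q (left_deriv br P h) p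
       = left_deriv br (s_bracket br P Q) h p"
  unfolding left_deriv_def[abs_def]
  using frechet_derivative_commutator[OF h has_derivative_dr_left_field[OF bl]
      has_derivative_dr_left_field[OF bl]]
  by (simp add: dr_left_field_bracket[OF bl skew])

section \<open>Conformal vector fields in the left-invariant frame\<close>

definition dr_frame_coord :: "('v::euclidean_space \<Rightarrow> 'v \<Rightarrow> 'z::euclidean_space)
    \<Rightarrow> (('v, 'z) dr_point \<Rightarrow> ('v, 'z) dr_point) \<Rightarrow> ('v, 'z) dr_point \<Rightarrow> ('v, 'z) dr_point \<Rightarrow> real" where
  "dr_frame_coord br \<xi> Q q = inner (dr_trivialize br q (\<xi> q)) Q"

lemma smooth_dr_frame_coord:
  fixes br :: "'v::euclidean_space \<Rightarrow> 'v \<Rightarrow> 'z::euclidean_space"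
    and \<xi> :: "('v, 'z) dr_point \<Rightarrow> ('v, 'z) dr_point"
  assumes bl: "bilinear br" and xi: "smooth_map \<xi>"
  shows "smooth_map (dr_frame_coord br \<xi> Q)"
proof -
  have "dr_frame_coord br \<xi> Q = (\<lambda>q. exp (- snd (snd q) / 2) * (fst (\<xi> q) \<bullet> fst Q)
      + exp (- snd (snd q)) * (fst (snd (\<xi> q)) \<bullet> fst (snd Q))
      - exp (- snd (snd q)) / 2 * (br (fst q) (fst (\<xi> q)) \<bullet> fst (snd Q))
      + snd (snd (\<xi> q)) * snd (snd Q))"
    by (simp add: fun_eq_iff dr_frame_coord_def dr_trivialize_def inner_prod_def inner_diff_left
        algebra_simps)
  moreover have "smooth_map (\<lambda>q::('v, 'z) dr_point. snd (snd q))"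
    "smooth_map (\<lambda>q::('v, 'z) dr_point. fst q)"
    by (intro smooth_linear; simp add: linear_iff)+
  moreover have "smooth_map (\<lambda>q. fst (\<xi> q))" "smooth_map (\<lambda>q. fst (snd (\<xi> q)))"
    "smooth_map (\<lambda>q. snd (snd (\<xi> q)))"
    by (intro smooth_linear_comp[OF xi]; simp add: linear_iff)+
  ultimately show ?thesis
    by (simp add: smooth_add smooth_diff smooth_mult smooth_exp smooth_minus smooth_divide smooth_const
        smooth_inner_const smooth_bilinear_inner[OF bl])
qed

lemma left_deriv_dr_frame_coord:
  fixes br :: "'v::euclidean_space \<Rightarrow> 'v \<Rightarrow> 'z::euclidean_space"
    and \<xi> :: "('v, 'z) dr_point \<Rightarrow> ('v, 'z) dr_point"
  assumes bl: "bilinear br" and xi: "smooth_map \<xi>"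
  shows "left_deriv br P (dr_frame_coord br \<xi> Q) p
     = inner (dr_trivialize_deriv br p (dr_left_field br P p) (\<xi> p)
              + dr_trivialize br p (frechet_derivative \<xi> (at p) (dr_left_field br P p))) Q"
proof -
  have "(dr_frame_coord br \<xi> Q has_derivative
      (\<lambda>d. inner (dr_trivialize_deriv br p d (\<xi> p)
                   + dr_trivialize br p (frechet_derivative \<xi> (at p) d)) Q)) (at p)"
    unfolding dr_frame_coord_def[abs_def]
    by (rule has_derivative_inner_left[OF has_derivative_dr_trivialize_field[OF bl
          smooth_map_has_derivative[OF xi]]])
  then show ?thesis
    unfolding left_deriv_def by (simp add: frechet_derivative_at[symmetric])
qed

lemma frechet_derivative_dr_metric:
  fixes br :: "'v::euclidean_space \<Rightarrow> 'v \<Rightarrow> 'z::euclidean_space"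
  assumes bl: "bilinear br"
  shows "frechet_derivative (\<lambda>q. dr_metric br q u w) (at p) d
       = inner (dr_trivialize_deriv br p d u) (dr_trivialize br p w)
         + inner (dr_trivialize br p u) (dr_trivialize_deriv br p d w)"
proof -
  have "((\<lambda>q. dr_metric br q u w) has_derivative
      (\<lambda>d. inner (dr_trivialize br p u) (dr_trivialize_deriv br p d w)
         + inner (dr_trivialize_deriv br p d u) (dr_trivialize br p w))) (at p)"
    unfolding dr_metric_eq_inner[OF bl]
    by (rule has_derivative_inner[OF has_derivative_dr_trivialize[OF bl]
          has_derivative_dr_trivialize[OF bl]])
  then show ?thesis
    by (simp add: frechet_derivative_at[symmetric])
qed

theorem conformal_frame_equation:
  fixes br :: "'v::euclidean_space \<Rightarrow> 'v \<Rightarrow> 'z::euclidean_space"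
    and \<xi> :: "('v, 'z) dr_point \<Rightarrow> ('v, 'z) dr_point"
  assumes bl: "bilinear br" and skew: "\<And>a b. br a b = - br b a" and xi: "smooth_map \<xi>"
    and conformal: "\<forall>p u w. lie_deriv_metric (dr_metric br) \<xi> p u w = 2 * \<rho> p * dr_metric br p u w"
  shows "left_deriv br P (dr_frame_coord br \<xi> Q) p + left_deriv br Q (dr_frame_coord br \<xi> P) p
      + inner (s_bracket br P (dr_trivialize br p (\<xi> p))) Q
      + inner P (s_bracket br Q (dr_trivialize br p (\<xi> p)))
      = 2 * \<rho> p * inner P Q"
proof -
  define u where "u = dr_left_field br P p"
  define w where "w = dr_left_field br Q p"
  define D where "D = frechet_derivative \<xi> (at p)"
  define N where "N = dr_trivialize_deriv br p"
  have Pu: "dr_trivialize br p u = P" and Qw: "dr_trivialize br p w = Q"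
    unfolding u_def w_def by (simp_all add: dr_trivialize_left_field[OF bl])
  have "N (\<xi> p) u = N u (\<xi> p) + s_bracket br P (dr_trivialize br p (\<xi> p))"
       "N (\<xi> p) w = N w (\<xi> p) + s_bracket br Q (dr_trivialize br p (\<xi> p))"
    using dr_trivialize_deriv_maurer_cartan[OF bl skew, of p "\<xi> p"]
    unfolding u_def w_def N_def by (simp_all add: algebra_simps)
  moreover have "inner (N (\<xi> p) u) Q + inner P (N (\<xi> p) w)
      + inner (dr_trivialize br p (D u)) Q + inner P (dr_trivialize br p (D w)) = 2 * \<rho> p * inner P Q"
    using conformal[rule_format, of p u w]
    unfolding lie_deriv_metric_def frechet_derivative_dr_metric[OF bl]
    by (simp only: dr_metric_eq_inner[OF bl] Pu Qw D_def N_def)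
  moreover have
    "left_deriv br P (dr_frame_coord br \<xi> Q) p = inner (N u (\<xi> p) + dr_trivialize br p (D u)) Q"
    "left_deriv br Q (dr_frame_coord br \<xi> P) p = inner (N w (\<xi> p) + dr_trivialize br p (D w)) P"
    unfolding left_deriv_dr_frame_coord[OF bl xi] u_def w_def D_def N_def by simp_all
  ultimately show ?thesis
    by (simp add: inner_add_left inner_add_right inner_commute algebra_simps)
qed

lemma dr_frame_coord_basis:
  "dr_frame_coord br \<xi> (v, 0, 0) q = fst (dr_trivialize br q (\<xi> q)) \<bullet> v"
  "dr_frame_coord br \<xi> (0, z, 0) q = fst (snd (dr_trivialize br q (\<xi> q))) \<bullet> z"
  "dr_frame_coord br \<xi> (0, 0, 1) q = snd (snd (dr_trivialize br q (\<xi> q)))"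
  by (simp_all add: dr_frame_coord_def inner_prod_def)

section \<open>Generalized Heisenberg algebras\<close>

lemma heisJ_inner:
  fixes br :: "'v::euclidean_space \<Rightarrow> 'v \<Rightarrow> 'z::euclidean_space"
  assumes "bilinear br"
  shows "inner (heisJ br Z V) W = inner Z (br V W)"
proof -
  have "linear (\<lambda>w. inner Z (br V w))"
    using assms unfolding bilinear_def
    by (intro linear_compose[of "br V" "inner Z", unfolded o_def]) (auto simp: linear_iff inner_add_right)
  from Linear_Algebra.linear_componentwise[OF this, where x = W and j = 1] show ?thesis
    by (simp add: heisJ_def inner_sum_right inner_commute mult.commute)
qed

lemma heisJ_add_left: "heisJ br (Z1 + Z2) V = heisJ br Z1 V + heisJ br Z2 V"
  by (simp add: heisJ_def inner_add_left scaleR_add_left sum.distrib)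

lemma gen_heisenberg_bilinear_skew:
  assumes "gen_heisenberg br"
  shows "bilinear br" "br V W = - br W V"
  using assms unfolding gen_heisenberg_def by blast+

lemma heisJ_norm:
  fixes br :: "'v::euclidean_space \<Rightarrow> 'v \<Rightarrow> 'z::euclidean_space"
  assumes gh: "gen_heisenberg br"
  shows "inner (heisJ br Z V) (heisJ br Z V) = (norm Z)\<^sup>2 * (norm V)\<^sup>2"
proof -
  note bl = gen_heisenberg_bilinear_skew(1)[OF gh]
  have "inner (heisJ br Z V) (heisJ br Z V) = - inner (heisJ br Z (heisJ br Z V)) V"
    using heisJ_inner[OF bl, of Z V "heisJ br Z V"] heisJ_inner[OF bl, of Z "heisJ br Z V" V]
      gen_heisenberg_bilinear_skew(2)[OF gh, of V "heisJ br Z V"]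
    by (simp add: inner_commute)
  also have "\<dots> = (norm Z)\<^sup>2 * (norm V)\<^sup>2"
    using gh unfolding gen_heisenberg_def by (simp add: power2_norm_eq_inner)
  finally show ?thesis .
qed

text \<open>Polarize heisJ_norm in Z.\<close>
lemma heisenberg_bracket_heisJ:
  fixes br :: "'v::euclidean_space \<Rightarrow> 'v \<Rightarrow> 'z::euclidean_space"
  assumes gh: "gen_heisenberg br" and x0: "norm x0 = 1" and z0: "norm z0 = 1"
  shows "br x0 (heisJ br z0 x0) = z0"
proof -
  note bl = gen_heisenberg_bilinear_skew(1)[OF gh]
  have x0_inner: "inner x0 x0 = 1"
    using x0 by (simp add: dot_square_norm)
  have "inner Z (br x0 (heisJ br z0 x0)) = inner Z z0" for Z
  proof -
    have "inner (heisJ br (Z + z0) x0) (heisJ br (Z + z0) x0) = inner (Z + z0) (Z + z0)"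
      using heisJ_norm[OF gh] x0_inner by (simp add: power2_norm_eq_inner)
    then have "inner (heisJ br Z x0) (heisJ br z0 x0) = inner Z z0"
      using heisJ_norm[OF gh, of Z x0] heisJ_norm[OF gh, of z0 x0] x0_inner
      by (simp add: heisJ_add_left inner_add_left inner_add_right inner_commute power2_norm_eq_inner)
    then show ?thesis
      by (simp add: heisJ_inner[OF bl])
  qed
  then show ?thesis
    using vector_eq_ldot by blast
qed

section \<open>Vanishing of the potential\<close>

lemma dr_frame_system_potential_zero:
  fixes br :: "'v::euclidean_space \<Rightarrow> 'v \<Rightarrow> 'z::euclidean_space"
    and a x y z \<rho> :: "('v, 'z) dr_point \<Rightarrow> real" and A X Y Z :: "('v, 'z) dr_point"
  assumes bl: "bilinear br" and skew: "\<And>V W. br V W = - br W V"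
    and AX: "s_bracket br A X = (1/2) *\<^sub>R X" and AY: "s_bracket br A Y = (1/2) *\<^sub>R Y"
    and AZ: "s_bracket br A Z = Z" and XY: "s_bracket br X Y = Z"
    and XZ: "s_bracket br X Z = 0" and YZ: "s_bracket br Y Z = 0"
    and smooth: "smooth_map a" "smooth_map x" "smooth_map y" "smooth_map z" "smooth_map \<rho>"
  defines "D \<equiv> left_deriv br"
  assumes eq_AA: "D A a = \<rho>"
    and eq_AX: "D X a = (\<lambda>q. - D A x q - x q / 2)"
    and eq_AY: "D Y a = (\<lambda>q. - D A y q - y q / 2)"
    and eq_AZ: "D Z a = (\<lambda>q. - D A z q - z q)"
    and eq_XX: "D X x = (\<lambda>q. \<rho> q + a q / 2)"
    and eq_YY: "D Y y = (\<lambda>q. \<rho> q + a q / 2)"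
    and eq_ZZ: "D Z z = (\<lambda>q. \<rho> q + a q)"
    and eq_XZ: "D X z = (\<lambda>q. - D Z x q - y q)"
    and eq_YZ: "D Y z = (\<lambda>q. x q - D Z y q)"
  shows "\<rho> p = 0"
proof -
  note eqs = eq_AA eq_AX eq_AY eq_AZ eq_XX eq_YY eq_ZZ eq_XZ eq_YZ
  note eqs = eqs[unfolded D_def]
  note calculus = D_def smooth smooth_left_deriv[OF bl] smooth_diff smooth_minus smooth_divide
    left_deriv_add left_deriv_diff left_deriv_minus left_deriv_divide
  have comm: "D P (D Q h) q - D Q (D P h) q = D (s_bracket br P Q) h q" if "smooth_map h" for P Q h q
    unfolding D_def using left_deriv_commutator[OF bl skew that] .
  have comm_half: "D P (D A h) q = D A (D P h) q - D P h q / 2"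
    if "smooth_map h" "s_bracket br A P = (1/2) *\<^sub>R P" for P h q
    using comm[OF that(1), of A P q] that(2) left_deriv_scaleR_field[OF bl that(1)]
    unfolding D_def by simp
  have comm_AZ: "D Z (D A h) q = D A (D Z h) q - D Z h q" if "smooth_map h" for h q
    using comm[OF that, of A Z q] AZ by simp
  have comm_XY: "D X (D Y h) q - D Y (D X h) q = D Z h q" if "smooth_map h" for h q
    using comm[OF that, of X Y q] XY by simp
  have comm_central: "D P (D Z h) q = D Z (D P h) q" if "smooth_map h" "s_bracket br P Z = 0" for P h q
    using comm[OF that(1), of P Z q] that(2) left_deriv_zero_field[OF bl that(1)]
    unfolding D_def by simp
  define w where "w q = D X y q - D Y x q" for q
  have smooth_w: "smooth_map w"
    unfolding w_def[abs_def] by (simp add: calculus)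
  have "D X (D Y a) q = - D A (D X y) q" "D Y (D X a) q = - D A (D Y x) q" for q
    using comm_half[OF smooth(3) AX, of q] comm_half[OF smooth(2) AY, of q]
    by (simp_all add: eqs calculus)
  then have Za: "D Z a = (\<lambda>q. - D A w q)"
    using comm_XY[OF smooth(1)] by (simp add: fun_eq_iff w_def[abs_def] calculus)
  have "D Y (D X z) q = - D Z (D Y x) q - D Y y q" "D X (D Y z) q = D X x q - D Z (D X y) q" for q
    using comm_central[OF smooth(2) YZ, of q] comm_central[OF smooth(3) XZ, of q]
    by (simp_all add: eqs calculus)
  then have "D Z w q = \<rho> q" for q
    using comm_XY[OF smooth(4), of q] by (simp add: w_def[abs_def] eqs calculus)
  then have Zw: "D Z w = \<rho>" ..
  have "D Z (D Z a) p = - D A \<rho> p - \<rho> p"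
    using comm_AZ[OF smooth(4), of p] by (simp add: eqs calculus)
  moreover have "D Z (D Z a) p = - D A \<rho> p + \<rho> p"
    using comm_AZ[OF smooth_w, of p] Za Zw by (simp add: smooth_w calculus)
  ultimately show "\<rho> p = 0"
    by linarith
qed

lemma s_bracket_basis:
  fixes br :: "'v::euclidean_space \<Rightarrow> 'v \<Rightarrow> 'z::euclidean_space"
  assumes "bilinear br"
  shows "s_bracket br (0, 0, 1) (v, 0, 0) = (1/2) *\<^sub>R (v, 0, 0)"
    and "s_bracket br (0, 0, 1) (0, z, 0) = (0, z, 0)"
    and "s_bracket br (v, 0, 0) (w, 0, 0) = (0, br v w, 0)"
    and "s_bracket br (v, 0, 0) (0, z, 0) = 0"
  by (simp_all add: s_bracket_def bilinear_lzero[OF assms] bilinear_rzero[OF assms] zero_prod_def)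

lemma dr_conformal_frame_equations:
  fixes br :: "'v::euclidean_space \<Rightarrow> 'v \<Rightarrow> 'z::euclidean_space"
    and \<xi> :: "('v, 'z) dr_point \<Rightarrow> ('v, 'z) dr_point" and x0 :: 'v and z0 :: 'z
  assumes gh: "gen_heisenberg br" and xi: "smooth_map \<xi>"
    and conformal: "\<forall>p u w. lie_deriv_metric (dr_metric br) \<xi> p u w = 2 * \<rho> p * dr_metric br p u w"
    and x0: "norm x0 = 1" and z0: "norm z0 = 1"
  defines "A \<equiv> (0, 0, 1)" and "X \<equiv> (x0, 0, 0)" and "Y \<equiv> (heisJ br z0 x0, 0, 0)"
    and "Z \<equiv> (0, z0, 0)"
    and "D \<equiv> left_deriv br" and "c \<equiv> dr_frame_coord br \<xi>"
  shows "D A (c A) = \<rho>"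
    and "D X (c A) = (\<lambda>q. - D A (c X) q - c X q / 2)"
    and "D Y (c A) = (\<lambda>q. - D A (c Y) q - c Y q / 2)"
    and "D Z (c A) = (\<lambda>q. - D A (c Z) q - c Z q)"
    and "D X (c X) = (\<lambda>q. \<rho> q + c A q / 2)"
    and "D Y (c Y) = (\<lambda>q. \<rho> q + c A q / 2)"
    and "D Z (c Z) = (\<lambda>q. \<rho> q + c A q)"
    and "D X (c Z) = (\<lambda>q. - D Z (c X) q - c Y q)"
    and "D Y (c Z) = (\<lambda>q. c X q - D Z (c Y) q)"
proof -
  note bl = gen_heisenberg_bilinear_skew(1)[OF gh]
  note frame = conformal_frame_equation[OF bl gen_heisenberg_bilinear_skew(2)[OF gh] xi conformal]
  define y0 where "y0 = heisJ br z0 x0"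
  have units: "x0 \<bullet> x0 = 1" "z0 \<bullet> z0 = 1" "y0 \<bullet> y0 = 1"
    using x0 z0 heisJ_norm[OF gh, of z0 x0] unfolding y0_def by (simp_all add: dot_square_norm)
  have "heisJ br z0 y0 = - x0"
    using gh z0 unfolding gen_heisenberg_def y0_def by simp
  then have J: "z0 \<bullet> br x0 v = y0 \<bullet> v" "z0 \<bullet> br y0 v = - (x0 \<bullet> v)" for v
    using heisJ_inner[OF bl, of z0 x0 v] heisJ_inner[OF bl, of z0 y0 v]
    unfolding y0_def by (simp_all add: inner_commute)
  note simps = A_def X_def Y_def[folded y0_def] Z_def D_def c_def dr_frame_coord_basis s_bracket_def
    inner_prod_def bilinear_lzero[OF bl] bilinear_rzero[OF bl] units J
  have "D A (c A) q = \<rho> q" for q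
    using frame[of A A q] by (simp add: simps inner_commute; linarith)
  moreover have "D X (c A) q = - D A (c X) q - c X q / 2" for q
    using frame[of X A q] by (simp add: simps inner_commute; linarith)
  moreover have "D Y (c A) q = - D A (c Y) q - c Y q / 2" for q
    using frame[of Y A q] by (simp add: simps inner_commute; linarith)
  moreover have "D Z (c A) q = - D A (c Z) q - c Z q" for q
    using frame[of Z A q] by (simp add: simps inner_commute; linarith)
  moreover have "D X (c X) q = \<rho> q + c A q / 2" for q
    using frame[of X X q] by (simp add: simps inner_commute; linarith)
  moreover have "D Y (c Y) q = \<rho> q + c A q / 2" for q
    using frame[of Y Y q] by (simp add: simps inner_commute; linarith)
  moreover have "D Z (c Z) q = \<rho> q + c A q" for q
    using frame[of Z Z q] by (simp add: simps inner_commute; linarith)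
  moreover have "D X (c Z) q = - D Z (c X) q - c Y q" for q
    using frame[of X Z q] by (simp add: simps inner_commute; linarith)
  moreover have "D Y (c Z) q = c X q - D Z (c Y) q" for q
    using frame[of Y Z q] by (simp add: simps inner_commute; linarith)
  ultimately show "D A (c A) = \<rho>"
    and "D X (c A) = (\<lambda>q. - D A (c X) q - c X q / 2)"
    and "D Y (c A) = (\<lambda>q. - D A (c Y) q - c Y q / 2)"
    and "D Z (c A) = (\<lambda>q. - D A (c Z) q - c Z q)"
    and "D X (c X) = (\<lambda>q. \<rho> q + c A q / 2)"
    and "D Y (c Y) = (\<lambda>q. \<rho> q + c A q / 2)"
    and "D Z (c Z) = (\<lambda>q. \<rho> q + c A q)"
    and "D X (c Z) = (\<lambda>q. - D Z (c X) q - c Y q)"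
    and "D Y (c Z) = (\<lambda>q. c X q - D Z (c Y) q)"
    by (simp_all add: fun_eq_iff)
qed

theorem theorem1p1:
  fixes br :: "'v::euclidean_space \<Rightarrow> 'v \<Rightarrow> 'z::euclidean_space"
    and \<xi> :: "'v \<times> 'z \<times> real \<Rightarrow> 'v \<times> 'z \<times> real"
    and \<rho> :: "'v \<times> 'z \<times> real \<Rightarrow> real"
  assumes "gen_heisenberg br"
    and "smooth_map \<xi>"
    and "smooth_map \<rho>"
    and "\<forall>p u w. lie_deriv_metric (dr_metric br) \<xi> p u w = 2 * \<rho> p * dr_metric br p u w"
  shows "\<forall>p. \<rho> p = 0"
proof
  fix p
  obtain x0 :: 'v where x0: "norm x0 = 1"
    using norm_Basis nonempty_Basis by blast
  obtain z0 :: 'z where z0: "norm z0 = 1"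
    using norm_Basis nonempty_Basis by blast
  note bl = gen_heisenberg_bilinear_skew(1)[OF assms(1)]
  note skew = gen_heisenberg_bilinear_skew(2)[OF assms(1)]
  note coord = smooth_dr_frame_coord[OF bl assms(2)]
  have XY: "s_bracket br (x0, 0, 0) (heisJ br z0 x0, 0, 0) = (0, z0, 0)"
    using s_bracket_basis(3)[OF bl] heisenberg_bracket_heisJ[OF assms(1) x0 z0] by simp
  show "\<rho> p = 0"
    by (rule dr_frame_system_potential_zero[OF bl skew
          s_bracket_basis(1)[OF bl] s_bracket_basis(1)[OF bl] s_bracket_basis(2)[OF bl] XY
          s_bracket_basis(4)[OF bl] s_bracket_basis(4)[OF bl] coord coord coord coord assms(3)
          dr_conformal_frame_equations[OF assms(1,2,4) x0 z0]])
qed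

end
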